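(* For a weakly coupled POMDP and horizon $T$, let $(\tau^m,\delta^m)_{m\in[M]}$ be an optimal solution of MILP (LB). Then the policy $\delta$ defined by $\delta^t_{\mathbf a|\mathbf o}=\prod_{m=1}^M\delta^{t,m}_{a^m|o^m}$ is an optimal deterministic decomposable policy for the weakly coupled POMDP problem with memoryless policies. Furthermore, MILP (IP) is a relaxation of MILP (LB) (every feasible solution of (LB) yields a feasible solution of (IP) with the same objective value). In particular $z_{\mathrm{LB}}\le v^*_{\mathrm{ml}}$ and $z_{\mathrm{LB}}\le z_{\mathrm{IP}}$.
   Context: Weakly coupled POMDP: components $m\in[M]$, each a POMDP $(\mathcal X_S^m,\mathcal X_O^m,\mathcal X_A^m,\mathfrak p^m,\mathbf r^m)$ with initial distribution $p^m(s)$, emissions $p^m(o|s)$, transitions $p^m(s'|s,a)$, reward $r^m(s,a,s')$; $\mathbf D^m:\mathcal X_A^m\to\mathbb R^q$, $\mathbf b\in\mathbb R^q_{\ge0}$. Full system: $\mathcal X_S=\prod_m\mathcal X_S^m$, $\mathcal X_O=\prod_m\mathcal X_O^m$, $\mathcal X_A=\{\mathbf a\in\prod_m\mathcal X_A^m:\sum_m\mathbf D^m(a^m)\le\mathbf b\}$ (nonempty), product initial/emission/transition probabilities and additive reward $r=\sum_m r^m$. A memoryless policy $\delta^t_{\mathbf a|\mathbf o}$ ($\mathbf a\in\mathcal X_A$) is a conditional distribution on $\mathcal X_A$ for each $\mathbf o,t$; $v^*_{\mathrm{ml}}$ is the maximum over these of $\mathbb E_\delta[\sum_{t=1}^T r(\mathbf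 S_t,\mathbf A_t,\mathbf S_{t+1})]$. A policy is decomposable if $\delta^t_{\mathbf a|\mathbf o}=\prod_m\delta^{t,m}_{a^m|o^m}$ for memoryless policies $\delta^m$ on component $m$, and deterministic if it takes values in $\{0,1\}$. For a POMDP, $\mathcal Q^{\mathrm d}(T,\mathcal X_S,\mathcal X_O,\mathcal X_A,\mathfrak p)$ is the set of $(\tau,\delta)$ with $\delta^t_{a|o}\in\{0,1\}$, $\sum_a\delta^t_{a|o}=1$, nonnegative $\tau$ satisfying (i) $\tau^1_s=p(s)$; (ii) $\sum_{o,a}\tau^t_{soa}=\nu^t_s$, $\nu^1_s=\tau^1_s$, $\nu^t_s=\sum_{s'',a''}\tau^{t-1}_{s''a''s}$; (iii) $\sum_{\bar s}\tau^t_{sa\bar s}=\sum_o\tau^t_{soa}$; (iv) $\tau^t_{sas'}=p(s'|s,a)\sum_{\bar s}\tau^t_{sa\bar s}$; (McCormick) $\tau^t_{soa}\le p(o|s)\nu^t_s$, $\tau^t_{soa}\le\delta^t_{a|o}$, $\tau^t_{soa}\ge p(o|s)\nu^t_s+\delta^t_{a|o}-1$. MILP (IP): maximize $\sum_t\sum_m\sum_{s,a,s'}r^m(s,a,s')\tau^{t,m}_{sas'}$ s.t. $(\tau^m,\delta^m)\in\mathcal Q^{\mathrm d}(T,\mathcal X_S^m,\mathcal X_O^m,\mathcal X_A^m,\mathfrak p^m)$ for all $m$, $\tau^{t,m}_a=\sum_{s,o}\tau^{t,m}_{soa}$, $\sum_m\sum_a\mathbf D^m(a)\tau^{t,m}_a\le\mathbf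 b$ for all $t$; value $z_{\mathrm{IP}}$. MILP (LB): same objective, s.t. $(\tau^m,\delta^m)\in\mathcal Q^{\mathrm d}(T,\mathcal X_S^m,\mathcal X_O^m,\mathcal X_A^m,\mathfrak p^m)$ for all $m$ and $\sum_m\sum_{a\in\mathcal X_A^m}\mathbf D^m(a)\delta^{t,m}_{a|o^m}\le\mathbf b$ for all $\mathbf o\in\mathcal X_O$, $t\in[T]$; value $z_{\mathrm{LB}}$. *)

theory Defs
  imports Complex_Main "HOL-Library.FuncSet"
begin

text \<open>A weakly coupled POMDP. Components are indexed by m < M (i.e. m = 0..M-1);
 time steps are t = 1..T. The linking constraint lives in R^q, modelled as 'q => real
 with 'q a finite index type.\<close>

record ('s, 'o, 'a, 'q) wcpomdp =
  ncomp :: nat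
  St  :: "nat \<Rightarrow> 's set"
  Ob  :: "nat \<Rightarrow> 'o set"
  Ac  :: "nat \<Rightarrow> 'a set"
  pinit :: "nat \<Rightarrow> 's \<Rightarrow> real"
  pemit :: "nat \<Rightarrow> 's \<Rightarrow> 'o \<Rightarrow> real"
  ptrans :: "nat \<Rightarrow> 's \<Rightarrow> 'a \<Rightarrow> 's \<Rightarrow> real"
  rew :: "nat \<Rightarrow> 's \<Rightarrow> 'a \<Rightarrow> 's \<Rightarrow> real"
  Dm :: "nat \<Rightarrow> 'a \<Rightarrow> 'q \<Rightarrow> real"
  bvec :: "'q \<Rightarrow> real"

definition XS :: "('s,'o,'a,'q) wcpomdp \<Rightarrow> (nat \<Rightarrow> 's) set" where
  "XS W = PiE {..<ncomp W} (St W)"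

definition XO :: "('s,'o,'a,'q) wcpomdp \<Rightarrow> (nat \<Rightarrow> 'o) set" where
  "XO W = PiE {..<ncomp W} (Ob W)"

definition XA :: "('s,'o,'a,'q::finite) wcpomdp \<Rightarrow> (nat \<Rightarrow> 'a) set" where
  "XA W = {a \<in> PiE {..<ncomp W} (Ac W).
             \<forall>j. (\<Sum>m<ncomp W. Dm W m (a m) j) \<le> bvec W j}"

definition P0 :: "('s,'o,'a,'q) wcpomdp \<Rightarrow> (nat \<Rightarrow> 's) \<Rightarrow> real" where
  "P0 W s = (\<Prod>m<ncomp W. pinit W m (s m))"

definition PE :: "('s,'o,'a,'q) wcpomdp \<Rightarrow> (nat \<Rightarrow> 's) \<Rightarrow> (nat \<Rightarrow> 'o) \<Rightarrow> real" where
  "PE W s ob = (\<Prod>m<ncomp W. pemit W m (s m) (ob m))"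

definition PT :: "('s,'o,'a,'q) wcpomdp \<Rightarrow> (nat \<Rightarrow> 's) \<Rightarrow> (nat \<Rightarrow> 'a) \<Rightarrow> (nat \<Rightarrow> 's) \<Rightarrow> real" where
  "PT W s a s' = (\<Prod>m<ncomp W. ptrans W m (s m) (a m) (s' m))"

definition RW :: "('s,'o,'a,'q) wcpomdp \<Rightarrow> (nat \<Rightarrow> 's) \<Rightarrow> (nat \<Rightarrow> 'a) \<Rightarrow> (nat \<Rightarrow> 's) \<Rightarrow> real" where
  "RW W s a s' = (\<Sum>m<ncomp W. rew W m (s m) (a m) (s' m))"

definition wc_valid :: "('s,'o,'a,'q::finite) wcpomdp \<Rightarrow> bool" where
  "wc_valid W \<longleftrightarrow>
     (\<forall>m<ncomp W.
        finite (St W m) \<and> St W m \<noteq> {} \<and> finite (Ob W m) \<and> Ob W m \<noteq> {} \<and>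
        finite (Ac W m) \<and> Ac W m \<noteq> {} \<and>
        (\<forall>s\<in>St W m. pinit W m s \<ge> 0) \<and> (\<Sum>s\<in>St W m. pinit W m s) = 1 \<and>
        (\<forall>s\<in>St W m. (\<forall>ob\<in>Ob W m. pemit W m s ob \<ge> 0) \<and> (\<Sum>ob\<in>Ob W m. pemit W m s ob) = 1) \<and>
        (\<forall>s\<in>St W m. \<forall>a\<in>Ac W m. (\<forall>s'\<in>St W m. ptrans W m s a s' \<ge> 0) \<and>
              (\<Sum>s'\<in>St W m. ptrans W m s a s') = 1)) \<and>
     (\<forall>j. bvec W j \<ge> 0) \<and> XA W \<noteq> {}"

type_synonym ('o,'a) jpolicy = "nat \<Rightarrow> (nat \<Rightarrow> 'o) \<Rightarrow> (nat \<Rightarrow> 'a) \<Rightarrow> real"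

definition ml_policy :: "('s,'o,'a,'q::finite) wcpomdp \<Rightarrow> nat \<Rightarrow> ('o,'a) jpolicy \<Rightarrow> bool" where
  "ml_policy W T \<delta> \<longleftrightarrow> (\<forall>t\<in>{1..T}. \<forall>ob\<in>XO W.
      (\<forall>a\<in>XA W. \<delta> t ob a \<ge> 0) \<and> (\<Sum>a\<in>XA W. \<delta> t ob a) = 1)"

definition det_policy :: "('s,'o,'a,'q::finite) wcpomdp \<Rightarrow> nat \<Rightarrow> ('o,'a) jpolicy \<Rightarrow> bool" where
  "det_policy W T \<delta> \<longleftrightarrow> (\<forall>t\<in>{1..T}. \<forall>ob\<in>XO W. \<forall>a\<in>XA W. \<delta> t ob a \<in> {0,1})"

definition comp_policy :: "('s,'o,'a,'q) wcpomdp \<Rightarrow> nat \<Rightarrow> nat \<Rightarrow> (nat \<Rightarrow> 'o \<Rightarrow> 'a \<Rightarrow> real) \<Rightarrow> bool" where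
  "comp_policy W T m \<delta>m \<longleftrightarrow> (\<forall>t\<in>{1..T}. \<forall>ob\<in>Ob W m.
      (\<forall>a\<in>Ac W m. \<delta>m t ob a \<ge> 0) \<and> (\<Sum>a\<in>Ac W m. \<delta>m t ob a) = 1)"

definition decomposable :: "('s,'o,'a,'q::finite) wcpomdp \<Rightarrow> nat \<Rightarrow> ('o,'a) jpolicy \<Rightarrow> bool" where
  "decomposable W T \<delta> \<longleftrightarrow> ml_policy W T \<delta> \<and>
     (\<exists>\<delta>c :: nat \<Rightarrow> nat \<Rightarrow> 'o \<Rightarrow> 'a \<Rightarrow> real.
        (\<forall>m<ncomp W. comp_policy W T m (\<delta>c m)) \<and>
        (\<forall>t\<in>{1..T}. \<forall>ob\<in>XO W. \<forall>a\<in>XA W. \<delta> t ob a = (\<Prod>m<ncomp W. \<delta>c m t (ob m) (a m))))"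

text \<open>Marginal law of the state at time n+1 under policy delta
  (S_1 ~ p, O_t ~ p(.|S_t), A_t ~ delta^t(.|O_t), S_{t+1} ~ p(.|S_t,A_t)).\<close>
primrec sdist :: "('s,'o,'a,'q::finite) wcpomdp \<Rightarrow> ('o,'a) jpolicy \<Rightarrow> nat \<Rightarrow> (nat \<Rightarrow> 's) \<Rightarrow> real" where
  "sdist W \<delta> 0 s' = P0 W s'"
| "sdist W \<delta> (Suc n) s' =
     (\<Sum>s\<in>XS W. \<Sum>ob\<in>XO W. \<Sum>a\<in>XA W. sdist W \<delta> n s * PE W s ob * \<delta> (Suc n) ob a * PT W s a s')"

definition pvalue :: "('s,'o,'a,'q::finite) wcpomdp \<Rightarrow> nat \<Rightarrow> ('o,'a) jpolicy \<Rightarrow> real" where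
  "pvalue W T \<delta> = (\<Sum>t\<in>{1..T}. \<Sum>s\<in>XS W. \<Sum>ob\<in>XO W. \<Sum>a\<in>XA W. \<Sum>s'\<in>XS W.
      sdist W \<delta> (t - 1) s * PE W s ob * \<delta> t ob a * PT W s a s' * RW W s a s')"

definition v_ml :: "('s,'o,'a,'q::finite) wcpomdp \<Rightarrow> nat \<Rightarrow> real" where
  "v_ml W T = Sup {pvalue W T \<delta> | \<delta>. ml_policy W T \<delta>}"

record ('s,'o,'a) tauvar =
  tS   :: "nat \<Rightarrow> 's \<Rightarrow> real"                 \<comment> \<open>tau^t_s (used at t = 1)\<close>
  tSOA :: "nat \<Rightarrow> 's \<Rightarrow> 'o \<Rightarrow> 'a \<Rightarrow> real"
  tSAS :: "nat \<Rightarrow> 's \<Rightarrow> 'a \<Rightarrow> 's \<Rightarrow> real"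

definition nuv :: "'s set \<Rightarrow> 'a set \<Rightarrow> ('s,'o,'a) tauvar \<Rightarrow> nat \<Rightarrow> 's \<Rightarrow> real" where
  "nuv S A \<tau> t s = (if t = 1 then tS \<tau> 1 s
                    else (\<Sum>s''\<in>S. \<Sum>a''\<in>A. tSAS \<tau> (t - 1) s'' a'' s))"

definition Qd :: "nat \<Rightarrow> 's set \<Rightarrow> 'o set \<Rightarrow> 'a set \<Rightarrow> ('s \<Rightarrow> real) \<Rightarrow> ('s \<Rightarrow> 'o \<Rightarrow> real)
     \<Rightarrow> ('s \<Rightarrow> 'a \<Rightarrow> 's \<Rightarrow> real) \<Rightarrow> ('s,'o,'a) tauvar \<Rightarrow> (nat \<Rightarrow> 'o \<Rightarrow> 'a \<Rightarrow> real) \<Rightarrow> bool" where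
  "Qd T Ss Os As p po ps \<tau> \<delta> \<longleftrightarrow>
     (\<forall>t\<in>{1..T}. \<forall>ob\<in>Os. (\<forall>a\<in>As. \<delta> t ob a \<in> {0,1}) \<and> (\<Sum>a\<in>As. \<delta> t ob a) = 1) \<and>
     (\<forall>s\<in>Ss. tS \<tau> 1 s \<ge> 0) \<and>
     (\<forall>t\<in>{1..T}. \<forall>s\<in>Ss.
        (\<forall>ob\<in>Os. \<forall>a\<in>As. tSOA \<tau> t s ob a \<ge> 0) \<and> (\<forall>a\<in>As. \<forall>s'\<in>Ss. tSAS \<tau> t s a s' \<ge> 0)) \<and>
     (\<forall>s\<in>Ss. tS \<tau> 1 s = p s) \<and>
     (\<forall>t\<in>{1..T}. \<forall>s\<in>Ss. (\<Sum>ob\<in>Os. \<Sum>a\<in>As. tSOA \<tau> t s ob a) = nuv Ss As \<tau> t s) \<and>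
     (\<forall>t\<in>{1..T}. \<forall>s\<in>Ss. \<forall>a\<in>As. (\<Sum>sb\<in>Ss. tSAS \<tau> t s a sb) = (\<Sum>ob\<in>Os. tSOA \<tau> t s ob a)) \<and>
     (\<forall>t\<in>{1..T}. \<forall>s\<in>Ss. \<forall>a\<in>As. \<forall>s'\<in>Ss.
        tSAS \<tau> t s a s' = ps s a s' * (\<Sum>sb\<in>Ss. tSAS \<tau> t s a sb)) \<and>
     (\<forall>t\<in>{1..T}. \<forall>s\<in>Ss. \<forall>ob\<in>Os. \<forall>a\<in>As.
        tSOA \<tau> t s ob a \<le> po s ob * nuv Ss As \<tau> t s \<and>
        tSOA \<tau> t s ob a \<le> \<delta> t ob a \<and>
        tSOA \<tau> t s ob a \<ge> po s ob * nuv Ss As \<tau> t s + \<delta> t ob a - 1)"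

definition comp_Qd :: "('s,'o,'a,'q) wcpomdp \<Rightarrow> nat \<Rightarrow> nat \<Rightarrow> ('s,'o,'a) tauvar
     \<Rightarrow> (nat \<Rightarrow> 'o \<Rightarrow> 'a \<Rightarrow> real) \<Rightarrow> bool" where
  "comp_Qd W T m \<tau> \<delta> = Qd T (St W m) (Ob W m) (Ac W m) (pinit W m) (pemit W m) (ptrans W m) \<tau> \<delta>"

definition milp_obj :: "('s,'o,'a,'q) wcpomdp \<Rightarrow> nat \<Rightarrow> (nat \<Rightarrow> ('s,'o,'a) tauvar) \<Rightarrow> real" where
  "milp_obj W T \<tau> = (\<Sum>t\<in>{1..T}. \<Sum>m<ncomp W. \<Sum>s\<in>St W m. \<Sum>a\<in>Ac W m. \<Sum>s'\<in>St W m.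
      rew W m s a s' * tSAS (\<tau> m) t s a s')"

text \<open>Feasibility for MILP (IP): tau^{t,m}_a = sum_{s,ob} tau^{t,m}_{soa}.\<close>
definition IP_feasible :: "('s,'o,'a,'q::finite) wcpomdp \<Rightarrow> nat \<Rightarrow> (nat \<Rightarrow> ('s,'o,'a) tauvar)
     \<Rightarrow> (nat \<Rightarrow> nat \<Rightarrow> 'o \<Rightarrow> 'a \<Rightarrow> real) \<Rightarrow> bool" where
  "IP_feasible W T \<tau> \<delta> \<longleftrightarrow> (\<forall>m<ncomp W. comp_Qd W T m (\<tau> m) (\<delta> m)) \<and>
     (\<forall>t\<in>{1..T}. \<forall>j. (\<Sum>m<ncomp W. \<Sum>a\<in>Ac W m.
         Dm W m a j * (\<Sum>s\<in>St W m. \<Sum>ob\<in>Ob W m. tSOA (\<tau> m) t s ob a)) \<le> bvec W j)"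

definition LB_feasible :: "('s,'o,'a,'q::finite) wcpomdp \<Rightarrow> nat \<Rightarrow> (nat \<Rightarrow> ('s,'o,'a) tauvar)
     \<Rightarrow> (nat \<Rightarrow> nat \<Rightarrow> 'o \<Rightarrow> 'a \<Rightarrow> real) \<Rightarrow> bool" where
  "LB_feasible W T \<tau> \<delta> \<longleftrightarrow> (\<forall>m<ncomp W. comp_Qd W T m (\<tau> m) (\<delta> m)) \<and>
     (\<forall>ob\<in>XO W. \<forall>t\<in>{1..T}. \<forall>j.
        (\<Sum>m<ncomp W. \<Sum>a\<in>Ac W m. Dm W m a j * \<delta> m t (ob m) a) \<le> bvec W j)"

definition z_IP :: "('s,'o,'a,'q::finite) wcpomdp \<Rightarrow> nat \<Rightarrow> real" where
  "z_IP W T = Sup {milp_obj W T \<tau> | \<tau> \<delta>. IP_feasible W T \<tau> \<delta>}"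

definition LB_optimal :: "('s,'o,'a,'q::finite) wcpomdp \<Rightarrow> nat \<Rightarrow> (nat \<Rightarrow> ('s,'o,'a) tauvar)
     \<Rightarrow> (nat \<Rightarrow> nat \<Rightarrow> 'o \<Rightarrow> 'a \<Rightarrow> real) \<Rightarrow> bool" where
  "LB_optimal W T \<tau> \<delta> \<longleftrightarrow> LB_feasible W T \<tau> \<delta> \<and>
     (\<forall>\<tau>' \<delta>'. LB_feasible W T \<tau>' \<delta>' \<longrightarrow> milp_obj W T \<tau>' \<le> milp_obj W T \<tau>)"

definition prod_policy :: "('s,'o,'a,'q) wcpomdp \<Rightarrow> (nat \<Rightarrow> nat \<Rightarrow> 'o \<Rightarrow> 'a \<Rightarrow> real) \<Rightarrow> ('o,'a) jpolicy" where
  "prod_policy W \<delta> t ob a = (\<Prod>m<ncomp W. \<delta> m t (ob m) (a m))"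

end

theory Submission
  imports Defs
begin

text \<open>Because \<delta>(a|o) is 0 or 1, the McCormick inequalities
  of Q^d force \<tau>(s,o,a) = p(o|s) \<nu>(s) \<delta>(a|o), and by induction on t every point of Q^d is the
  occupation measure of \<delta>: \<nu>^t is the law of S_t and \<tau>^t(s,a,s') the law of (S_t, A_t, S_t+1).
  Hence the objective of (LB) and of (IP) is the sum over the components of their expected rewards.

  If the budget holds for every joint observation, as (LB) demands, the product of the component
  policies charges no joint action outside X_A. It is then a joint policy whose state law
  factorises over the components, so its value is the (LB) objective. Conversely, the components
  of a deterministic decomposable policy are deterministic and respect the budget for every joint
  observation, so their occupation measures are (LB)-feasible with the value of the policy.
  Averaging the budget constraint of (LB) over the product law of the observations at time t
  gives the constraint of (IP).\<close>

section \<open>Finite sums and products\<close>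

lemma mccormick_exact:
  fixes x y z :: real
  assumes "y \<in> {0, 1}" "0 \<le> z" "z \<le> x" "z \<le> y" "x + y - 1 \<le> z"
  shows "z = x * y"
  using assms by auto

lemma mccormick_product:
  fixes x y :: real
  assumes "0 \<le> x" "x \<le> 1" "y \<in> {0, 1}"
  shows "x * y \<le> x" "x * y \<le> y" "x + y - 1 \<le> x * y"
  using assms by auto

lemma sum_mult_point_mass:
  fixes f D :: "'a \<Rightarrow> real"
  assumes "finite A" "\<forall>a\<in>A. f a \<in> {0, 1}" "sum f A = 1" "a0 \<in> A" "f a0 \<noteq> 0"
  shows "(\<Sum>a\<in>A. D a * f a) = D a0"
proof -
  have "f a0 = 1" using assms(2,4,5) by blast
  moreover have "sum f A = f a0 + sum f (A - {a0})"
    using assms(1,4) by (simp add: sum.remove)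
  ultimately have "sum f (A - {a0}) = 0" using assms(3) by simp
  then have "\<forall>a\<in>A - {a0}. f a = 0"
    using assms(1,2) by (subst (asm) sum_nonneg_eq_0_iff) auto
  then have "(\<Sum>a\<in>A. D a * f a) = (\<Sum>a\<in>A. if a = a0 then D a else 0)"
    using \<open>f a0 = 1\<close> by (intro sum.cong) auto
  then show ?thesis using assms(1,4) by simp
qed

lemma prod_notin_01:
  fixes f :: "'i \<Rightarrow> real"
  assumes "finite I" "i \<in> I" "\<forall>j\<in>I. 0 < f j \<and> f j \<le> 1" "f i < 1"
  shows "prod f I \<notin> {0, 1}"
proof -
  have "prod f I = f i * prod f (I - {i})"
    using assms(1,2) by (simp add: prod.remove)
  moreover have "0 < prod f (I - {i})"
    using assms(3) by (intro prod_pos) auto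
  moreover have "prod f (I - {i}) \<le> 1"
    using assms(3) by (intro prod_le_1) auto
  moreover have "f i * prod f (I - {i}) \<le> f i"
    using \<open>prod f (I - {i}) \<le> 1\<close> assms(2,3) by (intro mult_left_le) auto
  ultimately have "0 < prod f I" "prod f I < 1"
    using assms(2,3,4) by (simp_all, linarith)
  then show ?thesis by auto
qed

lemma prod_in_01:
  fixes f :: "'i \<Rightarrow> real"
  shows "finite I \<Longrightarrow> \<forall>i\<in>I. f i \<in> {0, 1} \<Longrightarrow> prod f I \<in> {0, 1}"
  by (induction I rule: finite_induct) auto

lemma sum_rotate3:
  "(\<Sum>x\<in>A. \<Sum>y\<in>B. \<Sum>z\<in>C. f x y z) = (\<Sum>z\<in>C. \<Sum>x\<in>A. \<Sum>y\<in>B. f x y z)"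
  by (subst sum.swap) (simp only: sum.swap[of _ _ C])

lemma sum_rotate4:
  "(\<Sum>x\<in>A. \<Sum>y\<in>B. \<Sum>z\<in>C. \<Sum>w\<in>D. f x y z w) = (\<Sum>y\<in>B. \<Sum>z\<in>C. \<Sum>w\<in>D. \<Sum>x\<in>A. f x y z w)"
  by (subst sum.swap) (simp only: sum.swap[of _ _ A])

lemma sum3_PiE_prod:
  fixes f :: "'i \<Rightarrow> 'x \<Rightarrow> 'y \<Rightarrow> 'z \<Rightarrow> real"
  assumes "finite I" "\<And>i. i \<in> I \<Longrightarrow> finite (X i)" "\<And>i. i \<in> I \<Longrightarrow> finite (Y i)"
    "\<And>i. i \<in> I \<Longrightarrow> finite (Z i)"
  shows "(\<Sum>x\<in>PiE I X. \<Sum>y\<in>PiE I Y. \<Sum>z\<in>PiE I Z. \<Prod>i\<in>I. f i (x i) (y i) (z i))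
     = (\<Prod>i\<in>I. \<Sum>x\<in>X i. \<Sum>y\<in>Y i. \<Sum>z\<in>Z i. f i x y z)"
  by (simp add: prod_sum_PiE assms)

lemma sum_PiE_prod_mult_sum:
  fixes q h :: "'i \<Rightarrow> 'x \<Rightarrow> real"
  assumes fin: "finite I" "\<And>i. i \<in> I \<Longrightarrow> finite (X i)"
    and total: "\<And>i. i \<in> I \<Longrightarrow> (\<Sum>x\<in>X i. q i x) = 1"
  shows "(\<Sum>x\<in>PiE I X. (\<Prod>i\<in>I. q i (x i)) * (\<Sum>m\<in>I. h m (x m))) = (\<Sum>m\<in>I. \<Sum>x\<in>X m. q m x * h m x)"
proof -
  have "(\<Sum>x\<in>PiE I X. (\<Prod>i\<in>I. q i (x i)) * h m (x m)) = (\<Sum>x\<in>X m. q m x * h m x)" if m: "m \<in> I" for m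
  proof -
    let ?g = "\<lambda>i x. q i x * (if i = m then h m x else 1)"
    have "(\<Sum>x\<in>PiE I X. (\<Prod>i\<in>I. q i (x i)) * h m (x m)) = (\<Sum>x\<in>PiE I X. \<Prod>i\<in>I. ?g i (x i))"
      using fin m by (simp add: prod.distrib prod.delta)
    also have "\<dots> = (\<Prod>i\<in>I. \<Sum>x\<in>X i. ?g i x)"
      by (simp add: prod_sum_PiE fin)
    also have "\<dots> = (\<Sum>x\<in>X m. ?g m x) * (\<Prod>i\<in>I - {m}. \<Sum>x\<in>X i. ?g i x)"
      using fin m by (simp add: prod.remove)
    also have "(\<Prod>i\<in>I - {m}. \<Sum>x\<in>X i. ?g i x) = 1"
      using total by (intro prod.neutral) auto
    finally show ?thesis by simp
  qed
  then show ?thesis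
    by (simp only: sum_distrib_left sum.swap[where B = I]) (rule sum.cong; simp)
qed

lemma sum4_PiE_prod_mult_sum:
  fixes f :: "'i \<Rightarrow> 'x \<Rightarrow> 'y \<Rightarrow> 'z \<Rightarrow> 'x \<Rightarrow> real" and h :: "'i \<Rightarrow> 'x \<Rightarrow> 'y \<Rightarrow> 'z \<Rightarrow> 'x \<Rightarrow> real"
  assumes fin: "finite I" "\<And>i. i \<in> I \<Longrightarrow> finite (X i)" "\<And>i. i \<in> I \<Longrightarrow> finite (Y i)"
      "\<And>i. i \<in> I \<Longrightarrow> finite (Z i)"
    and total: "\<And>i. i \<in> I \<Longrightarrow> (\<Sum>x\<in>X i. \<Sum>y\<in>Y i. \<Sum>z\<in>Z i. \<Sum>v\<in>X i. f i x y z v) = 1"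
  shows "(\<Sum>x\<in>PiE I X. \<Sum>y\<in>PiE I Y. \<Sum>z\<in>PiE I Z. \<Sum>v\<in>PiE I X.
            (\<Prod>i\<in>I. f i (x i) (y i) (z i) (v i)) * (\<Sum>m\<in>I. h m (x m) (y m) (z m) (v m)))
       = (\<Sum>m\<in>I. \<Sum>x\<in>X m. \<Sum>y\<in>Y m. \<Sum>z\<in>Z m. \<Sum>v\<in>X m. f m x y z v * h m x y z v)"
proof -
  have "(\<Sum>x\<in>PiE I X. \<Sum>y\<in>PiE I Y. \<Sum>z\<in>PiE I Z. \<Sum>v\<in>PiE I X.
          (\<Prod>i\<in>I. f i (x i) (y i) (z i) (v i)) * h m (x m) (y m) (z m) (v m))
      = (\<Sum>x\<in>X m. \<Sum>y\<in>Y m. \<Sum>z\<in>Z m. \<Sum>v\<in>X m. f m x y z v * h m x y z v)" if m: "m \<in> I" for m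
  proof -
    let ?g = "\<lambda>i x y z v. f i x y z v * (if i = m then h m x y z v else 1)"
    have "(\<Sum>x\<in>PiE I X. \<Sum>y\<in>PiE I Y. \<Sum>z\<in>PiE I Z. \<Sum>v\<in>PiE I X.
            (\<Prod>i\<in>I. f i (x i) (y i) (z i) (v i)) * h m (x m) (y m) (z m) (v m))
        = (\<Sum>x\<in>PiE I X. \<Sum>y\<in>PiE I Y. \<Sum>z\<in>PiE I Z. \<Sum>v\<in>PiE I X. \<Prod>i\<in>I. ?g i (x i) (y i) (z i) (v i))"
      using fin m by (simp add: prod.distrib prod.delta)
    also have "\<dots> = (\<Prod>i\<in>I. \<Sum>x\<in>X i. \<Sum>y\<in>Y i. \<Sum>z\<in>Z i. \<Sum>v\<in>X i. ?g i x y z v)"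
      by (simp add: prod_sum_PiE fin)
    also have "\<dots> = (\<Sum>x\<in>X m. \<Sum>y\<in>Y m. \<Sum>z\<in>Z m. \<Sum>v\<in>X m. ?g m x y z v)
        * (\<Prod>i\<in>I - {m}. \<Sum>x\<in>X i. \<Sum>y\<in>Y i. \<Sum>z\<in>Z i. \<Sum>v\<in>X i. ?g i x y z v)"
      using fin m by (simp add: prod.remove)
    also have "(\<Prod>i\<in>I - {m}. \<Sum>x\<in>X i. \<Sum>y\<in>Y i. \<Sum>z\<in>Z i. \<Sum>v\<in>X i. ?g i x y z v) = 1"
      using total by (intro prod.neutral) auto
    finally show ?thesis by simp
  qed
  then show ?thesis
    by (simp only: sum_distrib_left sum.swap[where B = I]) (rule sum.cong; simp)
qed

section \<open>POMDPs and their occupation measures\<close>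

definition stoch_policy :: "'o set \<Rightarrow> 'a set \<Rightarrow> nat \<Rightarrow> (nat \<Rightarrow> 'o \<Rightarrow> 'a \<Rightarrow> real) \<Rightarrow> bool" where
  "stoch_policy Os As T d \<longleftrightarrow> (\<forall>t\<in>{1..T}. \<forall>ob\<in>Os. (\<forall>a\<in>As. 0 \<le> d t ob a) \<and> (\<Sum>a\<in>As. d t ob a) = 1)"

definition deterministic :: "'o set \<Rightarrow> 'a set \<Rightarrow> nat \<Rightarrow> (nat \<Rightarrow> 'o \<Rightarrow> 'a \<Rightarrow> real) \<Rightarrow> bool" where
  "deterministic Os As T d \<longleftrightarrow> (\<forall>t\<in>{1..T}. \<forall>ob\<in>Os. \<forall>a\<in>As. d t ob a \<in> {0, 1})"

lemma stoch_policy_nonneg: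
  "stoch_policy Os As T d \<Longrightarrow> t \<in> {1..T} \<Longrightarrow> ob \<in> Os \<Longrightarrow> a \<in> As \<Longrightarrow> 0 \<le> d t ob a"
  unfolding stoch_policy_def by blast

lemma stoch_policy_sum:
  "stoch_policy Os As T d \<Longrightarrow> t \<in> {1..T} \<Longrightarrow> ob \<in> Os \<Longrightarrow> (\<Sum>a\<in>As. d t ob a) = 1"
  unfolding stoch_policy_def by blast

lemma stoch_policy_le_one:
  assumes "stoch_policy Os As T d" "finite As" "t \<in> {1..T}" "ob \<in> Os" "a \<in> As"
  shows "d t ob a \<le> 1"
  using member_le_sum[of a As "d t ob"] stoch_policy_nonneg[OF assms(1,3,4)]
    stoch_policy_sum[OF assms(1,3,4)] assms(2,5) by simp

lemma stoch_policy_ex_pos: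
  assumes "stoch_policy Os As T d" "t \<in> {1..T}" "ob \<in> Os"
  shows "\<exists>a\<in>As. 0 < d t ob a"
proof (rule ccontr)
  assume "\<not> ?thesis"
  then have "\<forall>a\<in>As. d t ob a = 0"
    using stoch_policy_nonneg[OF assms] by force
  then show False
    using stoch_policy_sum[OF assms] by simp
qed

locale pomdp =
  fixes Ss :: "'s set" and Os :: "'o set" and As :: "'a set"
    and p :: "'s \<Rightarrow> real" and po :: "'s \<Rightarrow> 'o \<Rightarrow> real" and ps :: "'s \<Rightarrow> 'a \<Rightarrow> 's \<Rightarrow> real"
  assumes finite_states: "finite Ss" and finite_obs: "finite Os" and finite_actions: "finite As"
    and init_nonneg: "s \<in> Ss \<Longrightarrow> 0 \<le> p s"
    and init_sum: "(\<Sum>s\<in>Ss. p s) = 1"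
    and emit_nonneg: "s \<in> Ss \<Longrightarrow> ob \<in> Os \<Longrightarrow> 0 \<le> po s ob"
    and emit_sum: "s \<in> Ss \<Longrightarrow> (\<Sum>ob\<in>Os. po s ob) = 1"
    and trans_nonneg: "s \<in> Ss \<Longrightarrow> a \<in> As \<Longrightarrow> s' \<in> Ss \<Longrightarrow> 0 \<le> ps s a s'"
    and trans_sum: "s \<in> Ss \<Longrightarrow> a \<in> As \<Longrightarrow> (\<Sum>s'\<in>Ss. ps s a s') = 1"
begin

(* state_law d n is the law of the state at time n + 1: time steps start at 1. *)
primrec state_law :: "(nat \<Rightarrow> 'o \<Rightarrow> 'a \<Rightarrow> real) \<Rightarrow> nat \<Rightarrow> 's \<Rightarrow> real" where
  "state_law d 0 s = p s"
| "state_law d (Suc n) s' =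
     (\<Sum>s\<in>Ss. \<Sum>ob\<in>Os. \<Sum>a\<in>As. state_law d n s * po s ob * d (Suc n) ob a * ps s a s')"

definition obs_law :: "(nat \<Rightarrow> 'o \<Rightarrow> 'a \<Rightarrow> real) \<Rightarrow> nat \<Rightarrow> 'o \<Rightarrow> real" where
  "obs_law d n ob = (\<Sum>s\<in>Ss. state_law d n s * po s ob)"

definition stage_reward :: "('s \<Rightarrow> 'a \<Rightarrow> 's \<Rightarrow> real) \<Rightarrow> (nat \<Rightarrow> 'o \<Rightarrow> 'a \<Rightarrow> real) \<Rightarrow> nat \<Rightarrow> real" where
  "stage_reward r d t = (\<Sum>s\<in>Ss. \<Sum>ob\<in>Os. \<Sum>a\<in>As. \<Sum>s'\<in>Ss.
      state_law d (t - 1) s * po s ob * d t ob a * ps s a s' * r s a s')"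

lemma state_law_nonneg:
  assumes "stoch_policy Os As T d" "n \<le> T" "s \<in> Ss"
  shows "0 \<le> state_law d n s"
  using assms(2,3)
proof (induction n arbitrary: s)
  case 0
  then show ?case by (simp add: init_nonneg)
next
  case (Suc n)
  then have "Suc n \<in> {1..T}" by simp
  with Suc show ?case
    by (auto intro!: sum_nonneg mult_nonneg_nonneg emit_nonneg trans_nonneg
        stoch_policy_nonneg[OF assms(1)])
qed

lemma state_law_step_sum:
  assumes "stoch_policy Os As T d" "Suc n \<in> {1..T}"
  shows "(\<Sum>s'\<in>Ss. state_law d (Suc n) s') = (\<Sum>s\<in>Ss. state_law d n s)"
proof -
  have "(\<Sum>s'\<in>Ss. state_law d (Suc n) s')
      = (\<Sum>s\<in>Ss. \<Sum>ob\<in>Os. \<Sum>a\<in>As. state_law d n s * po s ob * d (Suc n) ob a * (\<Sum>s'\<in>Ss. ps s a s'))"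
    unfolding state_law.simps by (subst sum_rotate4) (simp add: sum_distrib_left)
  also have "\<dots> = (\<Sum>s\<in>Ss. state_law d n s * (\<Sum>ob\<in>Os. po s ob * (\<Sum>a\<in>As. d (Suc n) ob a)))"
    by (simp add: trans_sum sum_distrib_left mult.assoc)
  also have "\<dots> = (\<Sum>s\<in>Ss. state_law d n s)"
    by (simp add: emit_sum stoch_policy_sum[OF assms])
  finally show ?thesis .
qed

lemma state_law_sum:
  assumes "stoch_policy Os As T d" "n \<le> T"
  shows "(\<Sum>s\<in>Ss. state_law d n s) = 1"
  using assms(2)
  by (induction n) (simp_all add: init_sum state_law_step_sum[OF assms(1)] del: state_law.simps(2))

lemma state_law_le_one:
  assumes "stoch_policy Os As T d" "n \<le> T" "s \<in> Ss"
  shows "state_law d n s \<le> 1"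
  using member_le_sum[of s Ss "state_law d n"] state_law_nonneg[OF assms(1,2)]
    state_law_sum[OF assms(1,2)] finite_states assms(3) by simp

lemma obs_law_nonneg:
  "stoch_policy Os As T d \<Longrightarrow> n \<le> T \<Longrightarrow> ob \<in> Os \<Longrightarrow> 0 \<le> obs_law d n ob"
  unfolding obs_law_def by (auto intro!: sum_nonneg mult_nonneg_nonneg state_law_nonneg emit_nonneg)

lemma obs_law_sum:
  assumes "stoch_policy Os As T d" "n \<le> T"
  shows "(\<Sum>ob\<in>Os. obs_law d n ob) = 1"
proof -
  have "(\<Sum>ob\<in>Os. obs_law d n ob) = (\<Sum>s\<in>Ss. state_law d n s * (\<Sum>ob\<in>Os. po s ob))"
    unfolding obs_law_def by (subst sum.swap) (simp add: sum_distrib_left)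
  then show ?thesis by (simp add: emit_sum state_law_sum[OF assms])
qed

lemma stage_reward_one:
  assumes "stoch_policy Os As T d" "t \<in> {1..T}"
  shows "stage_reward (\<lambda>_ _ _. 1) d t = 1"
proof -
  obtain n where t: "t = Suc n" using assms(2) by (cases t) auto
  have "stage_reward (\<lambda>_ _ _. 1) d t = (\<Sum>s'\<in>Ss. state_law d t s')"
    unfolding stage_reward_def t state_law.simps by (subst (2) sum_rotate4) simp
  then show ?thesis using state_law_sum[OF assms(1)] assms(2) by simp
qed

lemma stage_reward_le:
  assumes "stoch_policy Os As T d" "t \<in> {1..T}"
  shows "stage_reward r d t \<le> (\<Sum>s\<in>Ss. \<Sum>a\<in>As. \<Sum>s'\<in>Ss. \<bar>r s a s'\<bar>)"
proof -
  let ?B = "\<Sum>s\<in>Ss. \<Sum>a\<in>As. \<Sum>s'\<in>Ss. \<bar>r s a s'\<bar>"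
  have r_le: "r s a s' \<le> ?B" if "s \<in> Ss" "a \<in> As" "s' \<in> Ss" for s a s'
  proof -
    have "\<bar>r s a s'\<bar> \<le> (\<Sum>s''\<in>Ss. \<bar>r s a s''\<bar>)"
      using that finite_states by (intro member_le_sum) auto
    also have "\<dots> \<le> (\<Sum>a'\<in>As. \<Sum>s''\<in>Ss. \<bar>r s a' s''\<bar>)"
      using that finite_actions
      by (intro member_le_sum[where f = "\<lambda>a'. \<Sum>s''\<in>Ss. \<bar>r s a' s''\<bar>"])
        (auto intro: sum_nonneg)
    also have "\<dots> \<le> ?B"
      using that finite_states
      by (intro member_le_sum[where f = "\<lambda>s. \<Sum>a'\<in>As. \<Sum>s''\<in>Ss. \<bar>r s a' s''\<bar>"])
        (auto intro: sum_nonneg)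
    finally show ?thesis by simp
  qed
  have "stage_reward r d t \<le> stage_reward (\<lambda>_ _ _. ?B) d t"
    unfolding stage_reward_def using assms(2)
    by (intro sum_mono mult_left_mono r_le)
       (auto intro!: mult_nonneg_nonneg state_law_nonneg[OF assms(1)] emit_nonneg trans_nonneg
         stoch_policy_nonneg[OF assms(1)])
  also have "\<dots> = ?B * stage_reward (\<lambda>_ _ _. 1) d t"
    unfolding stage_reward_def by (simp add: sum_distrib_left mult_ac)
  finally show ?thesis by (simp add: stage_reward_one[OF assms])
qed

lemma state_law_cong:
  assumes "\<And>t ob a. t \<in> {1..n} \<Longrightarrow> ob \<in> Os \<Longrightarrow> a \<in> As \<Longrightarrow> d t ob a = d' t ob a"
  shows "state_law d n s = state_law d' n s"
  using assms by (induction n arbitrary: s) (simp_all add: le_SucI)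

lemma stage_reward_cong:
  assumes "\<And>t' ob a. t' \<in> {1..t} \<Longrightarrow> ob \<in> Os \<Longrightarrow> a \<in> As \<Longrightarrow> d t' ob a = d' t' ob a" "1 \<le> t"
  shows "stage_reward r d t = stage_reward r d' t"
proof -
  have "state_law d (t - 1) s = state_law d' (t - 1) s" for s
    using assms(1) by (intro state_law_cong) auto
  then show ?thesis
    unfolding stage_reward_def using assms by simp
qed

(* The occupation measures of the policy d (compare Qd_solution.tSOA_eq). *)
definition canonical_tau :: "(nat \<Rightarrow> 'o \<Rightarrow> 'a \<Rightarrow> real) \<Rightarrow> ('s, 'o, 'a) tauvar" where
  "canonical_tau d =
     \<lparr>tS = (\<lambda>t. p),
      tSOA = (\<lambda>t s ob a. po s ob * state_law d (t - 1) s * d t ob a),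
      tSAS = (\<lambda>t s a s'. ps s a s' * (\<Sum>ob\<in>Os. po s ob * state_law d (t - 1) s * d t ob a))\<rparr>"

lemma canonical_tau_sel:
  "tS (canonical_tau d) t = p"
  "tSOA (canonical_tau d) t s ob a = po s ob * state_law d (t - 1) s * d t ob a"
  "tSAS (canonical_tau d) t s a s' = ps s a s' * (\<Sum>ob\<in>Os. tSOA (canonical_tau d) t s ob a)"
  by (simp_all add: canonical_tau_def)

lemma nuv_canonical_tau:
  assumes "1 \<le> t"
  shows "nuv Ss As (canonical_tau d) t s = state_law d (t - 1) s"
proof (cases "t = 1")
  case False
  then obtain n where t: "t = Suc (Suc n)" using assms by (cases t; cases "t - 1") auto
  have "nuv Ss As (canonical_tau d) t s = (\<Sum>s''\<in>Ss. \<Sum>a\<in>As. \<Sum>ob\<in>Os.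
      state_law d n s'' * po s'' ob * d (Suc n) ob a * ps s'' a s)"
    unfolding nuv_def t by (simp add: canonical_tau_sel sum_distrib_left mult_ac)
  then show ?thesis
    unfolding t by (simp add: sum.swap[of _ As])
qed (simp add: nuv_def canonical_tau_sel)

lemma Qd_canonical_tau:
  assumes pol: "stoch_policy Os As T d" and det: "deterministic Os As T d"
  shows "Qd T Ss Os As p po ps (canonical_tau d) d"
proof -
  have d01: "d t ob a \<in> {0, 1}" if "t \<in> {1..T}" "ob \<in> Os" "a \<in> As" for t ob a
    using det that unfolding deterministic_def by blast
  have x01: "0 \<le> po s ob * state_law d (t - 1) s" "po s ob * state_law d (t - 1) s \<le> 1"
    if "t \<in> {1..T}" "s \<in> Ss" "ob \<in> Os" for t s ob
  proof -
    have "po s ob \<le> 1"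
      using member_le_sum[of ob Os "po s"] emit_nonneg emit_sum finite_obs that by simp
    moreover have "0 \<le> state_law d (t - 1) s" "state_law d (t - 1) s \<le> 1"
      using that state_law_nonneg[OF pol] state_law_le_one[OF pol] by auto
    ultimately show "0 \<le> po s ob * state_law d (t - 1) s" "po s ob * state_law d (t - 1) s \<le> 1"
      using emit_nonneg that by (auto intro: mult_le_one)
  qed
  have soa_sum: "(\<Sum>ob\<in>Os. \<Sum>a\<in>As. tSOA (canonical_tau d) t s ob a) = state_law d (t - 1) s"
    if "t \<in> {1..T}" "s \<in> Ss" for t s
    using that by (simp add: canonical_tau_sel stoch_policy_sum[OF pol] emit_sum
        flip: sum_distrib_left sum_distrib_right)
  show ?thesis
    unfolding Qd_def
    using d01 x01 soa_sum
    by (auto simp: nuv_canonical_tau canonical_tau_sel init_nonneg trans_sum mccormick_product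
        stoch_policy_sum[OF pol] intro!: mult_nonneg_nonneg sum_nonneg emit_nonneg trans_nonneg
        state_law_nonneg[OF pol] stoch_policy_nonneg[OF pol] simp flip: sum_distrib_right)
qed

end

locale Qd_solution = pomdp Ss Os As p po ps
  for Ss :: "'s set" and Os :: "'o set" and As :: "'a set"
    and p :: "'s \<Rightarrow> real" and po :: "'s \<Rightarrow> 'o \<Rightarrow> real" and ps :: "'s \<Rightarrow> 'a \<Rightarrow> 's \<Rightarrow> real" +
  fixes T :: nat and \<tau> :: "('s, 'o, 'a) tauvar" and d :: "nat \<Rightarrow> 'o \<Rightarrow> 'a \<Rightarrow> real"
  assumes Qd: "Qd T Ss Os As p po ps \<tau> d"
begin

lemma policy_deterministic: "deterministic Os As T d"
  using Qd[unfolded Qd_def, THEN conjunct1] unfolding deterministic_def by blast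

lemma policy_stochastic: "stoch_policy Os As T d"
  using Qd[unfolded Qd_def, THEN conjunct1] unfolding stoch_policy_def by force

lemma tS_init: "s \<in> Ss \<Longrightarrow> tS \<tau> 1 s = p s"
  using Qd unfolding Qd_def by blast

lemma tSOA_nonneg: "t \<in> {1..T} \<Longrightarrow> s \<in> Ss \<Longrightarrow> ob \<in> Os \<Longrightarrow> a \<in> As \<Longrightarrow> 0 \<le> tSOA \<tau> t s ob a"
  using Qd unfolding Qd_def by blast

lemma tSAS_eq:
  assumes "t \<in> {1..T}" "s \<in> Ss" "a \<in> As" "s' \<in> Ss"
  shows "tSAS \<tau> t s a s' = ps s a s' * (\<Sum>ob\<in>Os. tSOA \<tau> t s ob a)"
  using Qd assms unfolding Qd_def by metis

lemma tSOA_mccormick: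
  assumes "t \<in> {1..T}" "s \<in> Ss" "ob \<in> Os" "a \<in> As"
  shows "tSOA \<tau> t s ob a = po s ob * nuv Ss As \<tau> t s * d t ob a"
proof (rule mccormick_exact)
  show "d t ob a \<in> {0, 1}"
    using policy_deterministic assms unfolding deterministic_def by blast
  show "0 \<le> tSOA \<tau> t s ob a" using tSOA_nonneg assms .
qed (use Qd assms in \<open>unfold Qd_def, blast+\<close>)

lemma nuv_eq_state_law:
  assumes "t \<in> {1..T}" "s \<in> Ss"
  shows "nuv Ss As \<tau> t s = state_law d (t - 1) s"
  using assms
proof (induction t arbitrary: s)
  case (Suc t)
  show ?case
  proof (cases "t = 0")
    case True
    then show ?thesis using Suc.prems tS_init[of s] by (simp add: nuv_def)
  next
    case False
    then have t: "t \<in> {1..T}" using Suc.prems by auto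
    have "nuv Ss As \<tau> (Suc t) s = (\<Sum>s''\<in>Ss. \<Sum>a\<in>As. tSAS \<tau> t s'' a s)"
      using False by (simp add: nuv_def)
    also have "\<dots> = (\<Sum>s''\<in>Ss. \<Sum>a\<in>As. \<Sum>ob\<in>Os.
        state_law d (t - 1) s'' * po s'' ob * d t ob a * ps s'' a s)"
      using t Suc.prems(2)
      by (intro sum.cong refl) (simp add: tSAS_eq tSOA_mccormick Suc.IH sum_distrib_left mult_ac)
    also have "\<dots> = state_law d t s"
      using False by (cases t) (simp_all add: sum.swap[of _ As])
    finally show ?thesis by simp
  qed
qed simp

lemma tSOA_eq:
  assumes "t \<in> {1..T}" "s \<in> Ss" "ob \<in> Os" "a \<in> As"
  shows "tSOA \<tau> t s ob a = po s ob * state_law d (t - 1) s * d t ob a"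
  using assms by (simp add: tSOA_mccormick nuv_eq_state_law)

lemma objective_eq:
  assumes "t \<in> {1..T}"
  shows "(\<Sum>s\<in>Ss. \<Sum>a\<in>As. \<Sum>s'\<in>Ss. r s a s' * tSAS \<tau> t s a s') = stage_reward r d t"
proof -
  have "(\<Sum>s\<in>Ss. \<Sum>a\<in>As. \<Sum>s'\<in>Ss. r s a s' * tSAS \<tau> t s a s')
      = (\<Sum>s\<in>Ss. \<Sum>a\<in>As. \<Sum>s'\<in>Ss. \<Sum>ob\<in>Os.
          state_law d (t - 1) s * po s ob * d t ob a * ps s a s' * r s a s')"
    using assms by (intro sum.cong refl) (simp add: tSAS_eq tSOA_eq sum_distrib_left mult_ac)
  also have "\<dots> = stage_reward r d t"
    unfolding stage_reward_def
    by (intro sum.cong refl) (rule sum_rotate3)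
  finally show ?thesis .
qed

lemma action_occupancy_eq:
  assumes "t \<in> {1..T}" "a \<in> As"
  shows "(\<Sum>s\<in>Ss. \<Sum>ob\<in>Os. tSOA \<tau> t s ob a) = (\<Sum>ob\<in>Os. obs_law d (t - 1) ob * d t ob a)"
proof -
  have "(\<Sum>s\<in>Ss. \<Sum>ob\<in>Os. tSOA \<tau> t s ob a)
      = (\<Sum>s\<in>Ss. \<Sum>ob\<in>Os. state_law d (t - 1) s * po s ob * d t ob a)"
    using assms by (intro sum.cong refl) (simp add: tSOA_eq mult_ac)
  then show ?thesis
    unfolding obs_law_def by (simp add: sum_distrib_right) (rule sum.swap)
qed

end

section \<open>The weakly coupled system as a POMDP\<close>

lemma comp_policy_iff: "comp_policy W T m d \<longleftrightarrow> stoch_policy (Ob W m) (Ac W m) T d"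
  unfolding comp_policy_def stoch_policy_def ..

lemma ml_policy_iff: "ml_policy W T \<delta> \<longleftrightarrow> stoch_policy (XO W) (XA W) T \<delta>"
  unfolding ml_policy_def stoch_policy_def ..

lemma pomdp_component:
  assumes "wc_valid W" "m < ncomp W"
  shows "pomdp (St W m) (Ob W m) (Ac W m) (pinit W m) (pemit W m) (ptrans W m)"
  using assms by unfold_locales (auto simp: wc_valid_def)

lemma Qd_solution_component:
  assumes "wc_valid W" "m < ncomp W" "comp_Qd W T m \<tau> d"
  shows "Qd_solution (St W m) (Ob W m) (Ac W m) (pinit W m) (pemit W m) (ptrans W m) T \<tau> d"
  using pomdp_component[OF assms(1,2)] assms(3)
  by (simp add: Qd_solution_def Qd_solution_axioms_def comp_Qd_def)

abbreviation comp_law ::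
    "('s, 'o, 'a, 'q) wcpomdp \<Rightarrow> nat \<Rightarrow> (nat \<Rightarrow> 'o \<Rightarrow> 'a \<Rightarrow> real) \<Rightarrow> nat \<Rightarrow> 's \<Rightarrow> real"
  where
  "comp_law W m \<equiv> pomdp.state_law (St W m) (Ob W m) (Ac W m) (pinit W m) (pemit W m) (ptrans W m)"

abbreviation comp_obs_law ::
    "('s, 'o, 'a, 'q) wcpomdp \<Rightarrow> nat \<Rightarrow> (nat \<Rightarrow> 'o \<Rightarrow> 'a \<Rightarrow> real) \<Rightarrow> nat \<Rightarrow> 'o \<Rightarrow> real"
  where
  "comp_obs_law W m \<equiv> pomdp.obs_law (St W m) (Ob W m) (Ac W m) (pinit W m) (pemit W m) (ptrans W m)"

abbreviation comp_stage_reward ::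
    "('s, 'o, 'a, 'q) wcpomdp \<Rightarrow> nat \<Rightarrow> (nat \<Rightarrow> 'o \<Rightarrow> 'a \<Rightarrow> real) \<Rightarrow> nat \<Rightarrow> real"
  where
  "comp_stage_reward W m \<equiv>
     pomdp.stage_reward (St W m) (Ob W m) (Ac W m) (pinit W m) (pemit W m) (ptrans W m) (rew W m)"

abbreviation comp_canonical_tau ::
    "('s, 'o, 'a, 'q) wcpomdp \<Rightarrow> nat \<Rightarrow> (nat \<Rightarrow> 'o \<Rightarrow> 'a \<Rightarrow> real) \<Rightarrow> ('s, 'o, 'a) tauvar"
  where
  "comp_canonical_tau W m \<equiv>
     pomdp.canonical_tau (St W m) (Ob W m) (Ac W m) (pinit W m) (pemit W m) (ptrans W m)"

abbreviation joint_law ::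
    "('s, 'o, 'a, 'q::finite) wcpomdp \<Rightarrow> ('o, 'a) jpolicy \<Rightarrow> nat \<Rightarrow> (nat \<Rightarrow> 's) \<Rightarrow> real"
  where
  "joint_law W \<equiv> pomdp.state_law (XS W) (XO W) (XA W) (P0 W) (PE W) (PT W)"

abbreviation joint_stage_reward ::
    "('s, 'o, 'a, 'q::finite) wcpomdp \<Rightarrow> ('o, 'a) jpolicy \<Rightarrow> nat \<Rightarrow> real"
  where
  "joint_stage_reward W \<equiv> pomdp.stage_reward (XS W) (XO W) (XA W) (P0 W) (PE W) (PT W) (RW W)"

lemma XA_subset_PiE: "XA W \<subseteq> PiE {..<ncomp W} (Ac W)"
  by (auto simp: XA_def)

lemma XS_memD: "s \<in> XS W \<Longrightarrow> m < ncomp W \<Longrightarrow> s m \<in> St W m"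
  by (simp add: XS_def PiE_mem)

lemma XO_memD: "ob \<in> XO W \<Longrightarrow> m < ncomp W \<Longrightarrow> ob m \<in> Ob W m"
  by (simp add: XO_def PiE_mem)

lemma XA_memD: "a \<in> XA W \<Longrightarrow> m < ncomp W \<Longrightarrow> a m \<in> Ac W m"
  using XA_subset_PiE by (fastforce simp: PiE_mem)

lemma finite_components:
  assumes "wc_valid W" "m \<in> {..<ncomp W}"
  shows "finite (St W m)" "finite (Ob W m)" "finite (Ac W m)"
  using assms by (auto simp: wc_valid_def)

lemma finite_PiE_actions: "wc_valid W \<Longrightarrow> finite (PiE {..<ncomp W} (Ac W))"
  by (auto simp: wc_valid_def intro!: finite_PiE)

lemma pomdp_joint:
  assumes W: "wc_valid W"
  shows "pomdp (XS W) (XO W) (XA W) (P0 W) (PE W) (PT W)"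
proof -
  note comp = pomdp_component[OF W]
  have fin: "finite {..<ncomp W}" "\<And>m. m \<in> {..<ncomp W} \<Longrightarrow> finite (St W m)"
    "\<And>m. m \<in> {..<ncomp W} \<Longrightarrow> finite (Ob W m)"
    using pomdp.finite_states[OF comp] pomdp.finite_obs[OF comp] by auto
  show ?thesis
  proof
    show "finite (XS W)" "finite (XO W)"
      using fin by (auto simp: XS_def XO_def intro!: finite_PiE)
    show "finite (XA W)"
      using finite_PiE_actions[OF W] XA_subset_PiE by (rule finite_subset[rotated])
    show "0 \<le> P0 W s" if "s \<in> XS W" for s
      unfolding P0_def using that pomdp.init_nonneg[OF comp]
      by (auto intro!: prod_nonneg simp: XS_memD)
    show "(\<Sum>s\<in>XS W. P0 W s) = 1"
      unfolding XS_def P0_def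
      by (subst prod_sum_PiE[symmetric]) (simp_all add: fin pomdp.init_sum[OF comp])
    show "0 \<le> PE W s ob" if "s \<in> XS W" "ob \<in> XO W" for s ob
      unfolding PE_def using that pomdp.emit_nonneg[OF comp]
      by (auto intro!: prod_nonneg simp: XS_memD XO_memD)
    show "(\<Sum>ob\<in>XO W. PE W s ob) = 1" if "s \<in> XS W" for s
      unfolding XO_def PE_def using that
      by (subst prod_sum_PiE[symmetric]) (simp_all add: fin pomdp.emit_sum[OF comp] XS_memD)
    show "0 \<le> PT W s a s'" if "s \<in> XS W" "a \<in> XA W" "s' \<in> XS W" for s a s'
      unfolding PT_def using that pomdp.trans_nonneg[OF comp]
      by (auto intro!: prod_nonneg simp: XS_memD XA_memD)
    show "(\<Sum>s'\<in>XS W. PT W s a s') = 1" if "s \<in> XS W" "a \<in> XA W" for s a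
      unfolding XS_def PT_def using that
      by (subst prod_sum_PiE[symmetric]) (simp_all add: fin pomdp.trans_sum[OF comp] XS_memD XA_memD)
  qed
qed

lemma sdist_eq_joint_law: "wc_valid W \<Longrightarrow> sdist W \<delta> n s = joint_law W \<delta> n s"
  by (induction n arbitrary: s) (simp_all add: pomdp.state_law.simps[OF pomdp_joint])

lemma pvalue_eq_joint_stage_reward:
  "wc_valid W \<Longrightarrow> pvalue W T \<delta> = (\<Sum>t\<in>{1..T}. joint_stage_reward W \<delta> t)"
  by (simp add: pvalue_def pomdp.stage_reward_def[OF pomdp_joint] sdist_eq_joint_law)

lemma pvalue_cong:
  assumes "wc_valid W" "\<forall>t\<in>{1..T}. \<forall>ob\<in>XO W. \<forall>a\<in>XA W. \<delta> t ob a = \<delta>' t ob a"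
  shows "pvalue W T \<delta> = pvalue W T \<delta>'"
  unfolding pvalue_eq_joint_stage_reward[OF assms(1)]
  using assms(2) by (intro sum.cong refl pomdp.stage_reward_cong[OF pomdp_joint[OF assms(1)]]) auto

lemma ml_policy_cong:
  assumes "\<forall>t\<in>{1..T}. \<forall>ob\<in>XO W. \<forall>a\<in>XA W. \<delta> t ob a = \<delta>' t ob a"
  shows "ml_policy W T \<delta> \<longleftrightarrow> ml_policy W T \<delta>'"
  using assms unfolding ml_policy_def by (metis (no_types, lifting) sum.cong)

lemma det_policy_cong:
  assumes "\<forall>t\<in>{1..T}. \<forall>ob\<in>XO W. \<forall>a\<in>XA W. \<delta> t ob a = \<delta>' t ob a"
  shows "det_policy W T \<delta> \<longleftrightarrow> det_policy W T \<delta>'"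
  using assms unfolding det_policy_def by auto

section \<open>Product policies\<close>

definition respects_budget ::
    "('s, 'o, 'a, 'q::finite) wcpomdp \<Rightarrow> nat \<Rightarrow> (nat \<Rightarrow> nat \<Rightarrow> 'o \<Rightarrow> 'a \<Rightarrow> real) \<Rightarrow> bool"
  where
  "respects_budget W T dc \<longleftrightarrow>
     (\<forall>t\<in>{1..T}. \<forall>ob\<in>XO W. \<forall>a\<in>PiE {..<ncomp W} (Ac W) - XA W. prod_policy W dc t ob a = 0)"

lemma prod_policy_nonneg:
  assumes "\<forall>m<ncomp W. comp_policy W T m (dc m)" "t \<in> {1..T}" "ob \<in> XO W"
    "a \<in> PiE {..<ncomp W} (Ac W)"
  shows "0 \<le> prod_policy W dc t ob a"
  unfolding prod_policy_def
proof (rule prod_nonneg)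
  fix m assume "m \<in> {..<ncomp W}"
  with assms show "0 \<le> dc m t (ob m) (a m)"
    by (intro stoch_policy_nonneg[of "Ob W m" "Ac W m" T "dc m"])
      (auto simp: comp_policy_iff XO_memD PiE_mem)
qed

lemma sum_prod_policy_PiE:
  assumes W: "wc_valid W" and pol: "\<forall>m<ncomp W. comp_policy W T m (dc m)"
    and "t \<in> {1..T}" "ob \<in> XO W"
  shows "(\<Sum>a\<in>PiE {..<ncomp W} (Ac W). prod_policy W dc t ob a) = 1"
proof -
  have "(\<Sum>a\<in>PiE {..<ncomp W} (Ac W). prod_policy W dc t ob a)
      = (\<Prod>m<ncomp W. \<Sum>a\<in>Ac W m. dc m t (ob m) a)"
    unfolding prod_policy_def by (subst prod_sum_PiE) (simp_all add: finite_components[OF W])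
  also have "\<dots> = 1"
  proof (rule prod.neutral, rule ballI)
    fix m assume "m \<in> {..<ncomp W}"
    with pol assms(3,4) show "(\<Sum>a\<in>Ac W m. dc m t (ob m) a) = 1"
      by (intro stoch_policy_sum[of "Ob W m" "Ac W m" T "dc m"]) (auto simp: comp_policy_iff XO_memD)
  qed
  finally show ?thesis .
qed

lemma sum_XA_eq_sum_PiE:
  assumes "wc_valid W" "respects_budget W T dc" "t \<in> {1..T}" "ob \<in> XO W"
    and "\<And>a. prod_policy W dc t ob a = 0 \<Longrightarrow> g a = 0"
  shows "(\<Sum>a\<in>XA W. g a) = (\<Sum>a\<in>PiE {..<ncomp W} (Ac W). g a)"
proof (rule sum.mono_neutral_left)
  show "finite (PiE {..<ncomp W} (Ac W))" by (rule finite_PiE_actions[OF assms(1)])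
  show "XA W \<subseteq> PiE {..<ncomp W} (Ac W)" by (rule XA_subset_PiE)
qed (use assms in \<open>auto simp: respects_budget_def\<close>)

lemma ml_policy_prod_policy_iff:
  assumes W: "wc_valid W" and pol: "\<forall>m<ncomp W. comp_policy W T m (dc m)"
  shows "ml_policy W T (prod_policy W dc) \<longleftrightarrow> respects_budget W T dc"
proof
  assume ml: "ml_policy W T (prod_policy W dc)"
  show "respects_budget W T dc"
    unfolding respects_budget_def
  proof (intro ballI)
    fix t ob a
    assume t: "t \<in> {1..T}" and ob: "ob \<in> XO W" and a: "a \<in> PiE {..<ncomp W} (Ac W) - XA W"
    let ?P = "PiE {..<ncomp W} (Ac W)" and ?g = "prod_policy W dc t ob"
    have "sum ?g ?P = sum ?g (?P - XA W) + sum ?g (XA W)"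
      using XA_subset_PiE finite_PiE_actions[OF W] by (rule sum.subset_diff)
    then have "sum ?g (?P - XA W) = 0"
      using sum_prod_policy_PiE[OF W pol t ob] ml t ob by (simp add: ml_policy_def)
    then show "?g a = 0"
      using a finite_PiE_actions[OF W] prod_policy_nonneg[OF pol t ob]
      by (subst (asm) sum_nonneg_eq_0_iff) auto
  qed
next
  assume B: "respects_budget W T dc"
  show "ml_policy W T (prod_policy W dc)"
    unfolding ml_policy_def
  proof (intro ballI conjI)
    fix t ob a assume "t \<in> {1..T}" "ob \<in> XO W" "a \<in> XA W"
    then show "0 \<le> prod_policy W dc t ob a"
      using prod_policy_nonneg[OF pol] XA_subset_PiE by blast
  next
    fix t ob assume t: "t \<in> {1..T}" and ob: "ob \<in> XO W"
    have "(\<Sum>a\<in>XA W. prod_policy W dc t ob a) = (\<Sum>a\<in>PiE {..<ncomp W} (Ac W). prod_policy W dc t ob a)"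
      using sum_XA_eq_sum_PiE[OF W B t ob] by blast
    then show "(\<Sum>a\<in>XA W. prod_policy W dc t ob a) = 1"
      using sum_prod_policy_PiE[OF W pol t ob] by simp
  qed
qed

lemma joint_law_prod_policy:
  assumes W: "wc_valid W" and pol: "\<forall>m<ncomp W. comp_policy W T m (dc m)"
    and B: "respects_budget W T dc"
  shows "n \<le> T \<Longrightarrow> s \<in> XS W \<Longrightarrow>
    joint_law W (prod_policy W dc) n s = (\<Prod>m<ncomp W. comp_law W m (dc m) n (s m))"
proof (induction n arbitrary: s)
  case 0
  show ?case
    unfolding pomdp.state_law.simps(1)[OF pomdp_joint[OF W]] unfolding P0_def
    by (intro prod.cong refl) (simp add: pomdp.state_law.simps(1)[OF pomdp_component[OF W]])
next
  case (Suc n)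
  let ?I = "{..<ncomp W}"
  let ?F = "\<lambda>i x y z. comp_law W i (dc i) n x * pemit W i x y * dc i (Suc n) y z * ptrans W i x z (s i)"
  have t: "Suc n \<in> {1..T}" using Suc.prems by simp
  have "joint_law W (prod_policy W dc) (Suc n) s
      = (\<Sum>x\<in>XS W. \<Sum>ob\<in>XO W. \<Sum>a\<in>PiE ?I (Ac W).
          joint_law W (prod_policy W dc) n x * PE W x ob * prod_policy W dc (Suc n) ob a * PT W x a s)"
    unfolding pomdp.state_law.simps(2)[OF pomdp_joint[OF W]]
    by (intro sum.cong[OF refl] sum_XA_eq_sum_PiE[OF W B t]) auto
  also have "\<dots> = (\<Sum>x\<in>XS W. \<Sum>ob\<in>XO W. \<Sum>a\<in>PiE ?I (Ac W). \<Prod>i\<in>?I. ?F i (x i) (ob i) (a i))"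
    using Suc.prems
    by (intro sum.cong refl)
      (simp add: Suc.IH PE_def PT_def prod_policy_def prod.distrib del: pomdp.state_law.simps)
  also have "\<dots> = (\<Prod>i\<in>?I. \<Sum>x\<in>St W i. \<Sum>y\<in>Ob W i. \<Sum>z\<in>Ac W i. ?F i x y z)"
    unfolding XS_def XO_def by (rule sum3_PiE_prod) (simp_all add: finite_components[OF W])
  also have "\<dots> = (\<Prod>i\<in>?I. comp_law W i (dc i) (Suc n) (s i))"
    by (intro prod.cong refl) (simp add: pomdp.state_law.simps(2)[OF pomdp_component[OF W]])
  finally show ?case .
qed

lemma joint_stage_reward_prod_policy:
  assumes W: "wc_valid W" and pol: "\<forall>m<ncomp W. comp_policy W T m (dc m)"
    and B: "respects_budget W T dc" and t: "t \<in> {1..T}"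
  shows "joint_stage_reward W (prod_policy W dc) t = (\<Sum>m<ncomp W. comp_stage_reward W m (dc m) t)"
proof -
  let ?I = "{..<ncomp W}"
  let ?F = "\<lambda>i x y z v. comp_law W i (dc i) (t - 1) x * pemit W i x y * dc i t y z * ptrans W i x z v"
  have total: "(\<Sum>x\<in>St W i. \<Sum>y\<in>Ob W i. \<Sum>z\<in>Ac W i. \<Sum>v\<in>St W i. ?F i x y z v) = 1" if "i \<in> ?I" for i
    using pomdp.stage_reward_one[OF pomdp_component[OF W] _ t, of i "dc i"] pol that
    by (simp add: pomdp.stage_reward_def[OF pomdp_component[OF W]] comp_policy_iff)
  have law: "joint_law W (prod_policy W dc) (t - 1) x = (\<Prod>i\<in>?I. comp_law W i (dc i) (t - 1) (x i))"
    if "x \<in> XS W" for x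
    using t that by (intro joint_law_prod_policy[OF W pol B]) auto
  have "joint_stage_reward W (prod_policy W dc) t
      = (\<Sum>x\<in>XS W. \<Sum>ob\<in>XO W. \<Sum>a\<in>PiE ?I (Ac W). \<Sum>s'\<in>XS W.
          joint_law W (prod_policy W dc) (t - 1) x * PE W x ob * prod_policy W dc t ob a
            * PT W x a s' * RW W x a s')"
    unfolding pomdp.stage_reward_def[OF pomdp_joint[OF W]]
    by (intro sum.cong[OF refl] sum_XA_eq_sum_PiE[OF W B t]) auto
  also have "\<dots> = (\<Sum>x\<in>XS W. \<Sum>ob\<in>XO W. \<Sum>a\<in>PiE ?I (Ac W). \<Sum>s'\<in>XS W.
          (\<Prod>i\<in>?I. ?F i (x i) (ob i) (a i) (s' i)) * (\<Sum>m\<in>?I. rew W m (x m) (a m) (s' m)))"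
    using law by (intro sum.cong refl) (simp add: PE_def PT_def RW_def prod_policy_def prod.distrib)
  also have "\<dots> = (\<Sum>m\<in>?I. \<Sum>x\<in>St W m. \<Sum>y\<in>Ob W m. \<Sum>z\<in>Ac W m. \<Sum>v\<in>St W m. ?F m x y z v * rew W m x z v)"
    unfolding XS_def XO_def
    by (rule sum4_PiE_prod_mult_sum[where f = ?F and h = "\<lambda>m x y z v. rew W m x z v"])
      (use total in \<open>simp_all add: finite_components[OF W]\<close>)
  also have "\<dots> = (\<Sum>m\<in>?I. comp_stage_reward W m (dc m) t)"
    by (intro sum.cong refl) (simp add: pomdp.stage_reward_def[OF pomdp_component[OF W]])
  finally show ?thesis .
qed

lemma pvalue_prod_policy:
  assumes "wc_valid W" "\<forall>m<ncomp W. comp_policy W T m (dc m)" "respects_budget W T dc"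
  shows "pvalue W T (prod_policy W dc) = (\<Sum>t\<in>{1..T}. \<Sum>m<ncomp W. comp_stage_reward W m (dc m) t)"
  unfolding pvalue_eq_joint_stage_reward[OF assms(1)]
  by (intro sum.cong refl joint_stage_reward_prod_policy[OF assms])

lemma milp_obj_eq_sum_comp_stage_reward:
  assumes "wc_valid W" "\<forall>m<ncomp W. comp_Qd W T m (\<tau> m) (\<delta> m)"
  shows "milp_obj W T \<tau> = (\<Sum>t\<in>{1..T}. \<Sum>m<ncomp W. comp_stage_reward W m (\<delta> m) t)"
  unfolding milp_obj_def
  using Qd_solution.objective_eq[OF Qd_solution_component[OF assms(1)]] assms(2)
  by (intro sum.cong refl) auto

section \<open>Solutions of (LB) and (IP)\<close>

lemma LB_Qd_solution:
  assumes "wc_valid W" "LB_feasible W T \<tau> \<delta>" "m < ncomp W"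
  shows "Qd_solution (St W m) (Ob W m) (Ac W m) (pinit W m) (pemit W m) (ptrans W m) T (\<tau> m) (\<delta> m)"
  using assms by (intro Qd_solution_component) (auto simp: LB_feasible_def)

lemma LB_comp_policy:
  "wc_valid W \<Longrightarrow> LB_feasible W T \<tau> \<delta> \<Longrightarrow> \<forall>m<ncomp W. comp_policy W T m (\<delta> m)"
  by (auto simp: comp_policy_iff intro: Qd_solution.policy_stochastic[OF LB_Qd_solution])

lemma LB_respects_budget:
  assumes W: "wc_valid W" and LB: "LB_feasible W T \<tau> \<delta>"
  shows "respects_budget W T \<delta>"
  unfolding respects_budget_def
proof (intro ballI)
  fix t ob a
  assume t: "t \<in> {1..T}" and ob: "ob \<in> XO W" and a: "a \<in> PiE {..<ncomp W} (Ac W) - XA W"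
  show "prod_policy W \<delta> t ob a = 0"
  proof (rule ccontr)
    assume "prod_policy W \<delta> t ob a \<noteq> 0"
    then have pos: "\<delta> m t (ob m) (a m) \<noteq> 0" if "m < ncomp W" for m
      using that by (auto simp: prod_policy_def)
    have "(\<Sum>a'\<in>Ac W m. Dm W m a' j * \<delta> m t (ob m) a') = Dm W m (a m) j" if m: "m < ncomp W" for m j
    proof (rule sum_mult_point_mass)
      interpret Qd_solution "St W m" "Ob W m" "Ac W m" "pinit W m" "pemit W m" "ptrans W m" T "\<tau> m" "\<delta> m"
        using LB_Qd_solution[OF W LB m] .
      show "finite (Ac W m)" by (rule finite_actions)
      show "\<forall>a'\<in>Ac W m. \<delta> m t (ob m) a' \<in> {0, 1}"
        using policy_deterministic t XO_memD[OF ob m] unfolding deterministic_def by blast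
      show "sum (\<delta> m t (ob m)) (Ac W m) = 1"
        using stoch_policy_sum[OF policy_stochastic t XO_memD[OF ob m]] .
      show "a m \<in> Ac W m" using a m by (auto simp: PiE_mem)
      show "\<delta> m t (ob m) (a m) \<noteq> 0" using pos[OF m] .
    qed
    then have "(\<Sum>m<ncomp W. Dm W m (a m) j) \<le> bvec W j" for j
      using LB t ob unfolding LB_feasible_def by (metis (no_types, lifting) lessThan_iff sum.cong)
    then have "a \<in> XA W" using a unfolding XA_def by blast
    with a show False by blast
  qed
qed

lemma LB_prod_policy:
  assumes W: "wc_valid W" and LB: "LB_feasible W T \<tau> \<delta>"
  shows "ml_policy W T (prod_policy W \<delta>)" "det_policy W T (prod_policy W \<delta>)"
    "decomposable W T (prod_policy W \<delta>)"
proof -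
  note pol = LB_comp_policy[OF W LB]
  show ml: "ml_policy W T (prod_policy W \<delta>)"
    using ml_policy_prod_policy_iff[OF W pol] LB_respects_budget[OF W LB] by blast
  show "det_policy W T (prod_policy W \<delta>)"
    unfolding det_policy_def prod_policy_def
  proof (intro ballI prod_in_01)
    fix t ob a m assume "t \<in> {1..T}" "ob \<in> XO W" "a \<in> XA W" "m \<in> {..<ncomp W}"
    then show "\<delta> m t (ob m) (a m) \<in> {0, 1}"
      using Qd_solution.policy_deterministic[OF LB_Qd_solution[OF W LB]]
      by (auto simp: deterministic_def XO_memD XA_memD)
  qed simp
  show "decomposable W T (prod_policy W \<delta>)"
    unfolding decomposable_def using ml pol by (auto simp: prod_policy_def)
qed

lemma pvalue_LB:
  assumes W: "wc_valid W" and LB: "LB_feasible W T \<tau> \<delta>"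
  shows "pvalue W T (prod_policy W \<delta>) = milp_obj W T \<tau>"
proof -
  have "\<forall>m<ncomp W. comp_Qd W T m (\<tau> m) (\<delta> m)"
    using LB by (simp add: LB_feasible_def)
  then show ?thesis
    by (simp add: pvalue_prod_policy[OF W LB_comp_policy[OF W LB] LB_respects_budget[OF W LB]]
        milp_obj_eq_sum_comp_stage_reward[OF W])
qed

lemma LB_IP_feasible:
  assumes W: "wc_valid W" and LB: "LB_feasible W T \<tau> \<delta>"
  shows "IP_feasible W T \<tau> \<delta>"
  unfolding IP_feasible_def
proof (intro conjI allI impI ballI)
  show "m < ncomp W \<Longrightarrow> comp_Qd W T m (\<tau> m) (\<delta> m)" for m
    using LB by (simp add: LB_feasible_def)
  fix t j assume t: "t \<in> {1..T}"
  (* ?q m is the law of the observation of component m at time t; the product of these laws is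
     a probability on XO W, and averaging the (LB) constraint under it gives the (IP) constraint. *)
  let ?I = "{..<ncomp W}"
  let ?q = "\<lambda>m. comp_obs_law W m (\<delta> m) (t - 1)"
  let ?f = "\<lambda>m y. \<Sum>a\<in>Ac W m. Dm W m a j * \<delta> m t y a"
  have tT: "t - 1 \<le> T" using t by auto
  note pol = Qd_solution.policy_stochastic[OF LB_Qd_solution[OF W LB]]
  have q_nonneg: "0 \<le> ?q m y" if "m \<in> ?I" "y \<in> Ob W m" for m y
    using pomdp.obs_law_nonneg[OF pomdp_component[OF W] pol] that tT by simp
  have q_sum: "(\<Sum>y\<in>Ob W m. ?q m y) = 1" if "m \<in> ?I" for m
    using pomdp.obs_law_sum[OF pomdp_component[OF W] pol] that tT by simp
  have "(\<Sum>m<ncomp W. \<Sum>a\<in>Ac W m. Dm W m a j * (\<Sum>s\<in>St W m. \<Sum>ob\<in>Ob W m. tSOA (\<tau> m) t s ob a))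
      = (\<Sum>m\<in>?I. \<Sum>y\<in>Ob W m. ?q m y * ?f m y)"
  proof (intro sum.cong refl)
    fix m assume "m \<in> ?I"
    then interpret Qd_solution "St W m" "Ob W m" "Ac W m" "pinit W m" "pemit W m" "ptrans W m" T "\<tau> m" "\<delta> m"
      using LB_Qd_solution[OF W LB] by simp
    show "(\<Sum>a\<in>Ac W m. Dm W m a j * (\<Sum>s\<in>St W m. \<Sum>ob\<in>Ob W m. tSOA (\<tau> m) t s ob a))
        = (\<Sum>y\<in>Ob W m. ?q m y * ?f m y)"
      using t by (simp add: action_occupancy_eq sum_distrib_left sum_distrib_right mult_ac)
        (rule sum.swap)
  qed
  also have "\<dots> = (\<Sum>ob\<in>XO W. (\<Prod>i\<in>?I. ?q i (ob i)) * (\<Sum>m\<in>?I. ?f m (ob m)))"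
    unfolding XO_def
    by (rule sum_PiE_prod_mult_sum[symmetric])
      (use q_sum in \<open>simp_all add: finite_components[OF W]\<close>)
  also have "\<dots> \<le> (\<Sum>ob\<in>XO W. (\<Prod>i\<in>?I. ?q i (ob i)) * bvec W j)"
    using LB t q_nonneg unfolding LB_feasible_def
    by (intro sum_mono mult_left_mono) (auto intro!: prod_nonneg simp: XO_memD)
  also have "\<dots> = bvec W j"
    unfolding XO_def sum_distrib_right[symmetric]
    by (subst prod_sum_PiE[symmetric]) (use q_sum in \<open>simp_all add: finite_components[OF W]\<close>)
  finally show "(\<Sum>m<ncomp W. \<Sum>a\<in>Ac W m. Dm W m a j * (\<Sum>s\<in>St W m. \<Sum>ob\<in>Ob W m. tSOA (\<tau> m) t s ob a))
      \<le> bvec W j" .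
qed

section \<open>Deterministic decomposable policies\<close>

lemma positive_joint_action:
  assumes "\<forall>m<ncomp W. comp_policy W T m (dc m)" "t \<in> {1..T}" "ob \<in> XO W"
  obtains A where "A \<in> PiE {..<ncomp W} (Ac W)" "\<forall>i<ncomp W. 0 < dc i t (ob i) (A i)"
proof -
  have "\<forall>i\<in>{..<ncomp W}. \<exists>x\<in>Ac W i. 0 < dc i t (ob i) x"
    using assms by (auto intro: stoch_policy_ex_pos simp: comp_policy_iff XO_memD)
  then obtain f where "\<forall>i\<in>{..<ncomp W}. f i \<in> Ac W i \<and> 0 < dc i t (ob i) (f i)"
    by metis
  then show ?thesis
    using that[of "restrict f {..<ncomp W}"] by auto
qed

lemma XA_if_prod_policy_pos:
  assumes "respects_budget W T dc" "t \<in> {1..T}" "ob \<in> XO W" "A \<in> PiE {..<ncomp W} (Ac W)"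
    "\<forall>i<ncomp W. 0 < dc i t (ob i) (A i)"
  shows "A \<in> XA W"
proof -
  have "prod_policy W dc t ob A \<noteq> 0"
    unfolding prod_policy_def using assms(5) by (simp add: prod_pos less_imp_neq[symmetric])
  then show ?thesis using assms(1-4) unfolding respects_budget_def by blast
qed

lemma obtain_XO_coordinate:
  assumes "wc_valid W" "m < ncomp W" "y \<in> Ob W m"
  obtains ob where "ob \<in> XO W" "ob m = y"
proof -
  have "\<forall>i\<in>{..<ncomp W}. Ob W i \<noteq> {}"
    using assms(1) by (simp add: wc_valid_def)
  then obtain ob0 where "ob0 \<in> XO W"
    unfolding XO_def by (metis PiE_eq_empty_iff ex_in_conv)
  then have "ob0(m := y) \<in> XO W"
    using PiE_fun_upd[where T = "Ob W" and x = m, OF assms(3), of ob0 "{..<ncomp W}"] assms(2)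
    by (simp add: XO_def insert_absorb)
  then show ?thesis using that by simp
qed

lemma decomposable_components_deterministic:
  assumes W: "wc_valid W" and pol: "\<forall>m<ncomp W. comp_policy W T m (dc m)"
    and B: "respects_budget W T dc" and det: "det_policy W T (prod_policy W dc)"
    and m: "m < ncomp W"
  shows "deterministic (Ob W m) (Ac W m) T (dc m)"
  unfolding deterministic_def
proof (intro ballI)
  fix t y a assume t: "t \<in> {1..T}" and y: "y \<in> Ob W m" and a: "a \<in> Ac W m"
  have le1: "dc i t y' x \<le> 1" if "i < ncomp W" "y' \<in> Ob W i" "x \<in> Ac W i" for i y' x
    using pol that t by (intro stoch_policy_le_one[of "Ob W i" "Ac W i" T "dc i"])
      (auto simp: comp_policy_iff finite_components[OF W])
  (* If dc m randomises at y, combine its action a with positive-probability actions of the other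
     components: the joint action is feasible, yet its probability lies strictly between 0 and 1. *)
  show "dc m t y a \<in> {0, 1}"
  proof (rule ccontr)
    assume "dc m t y a \<notin> {0, 1}"
    moreover have "0 \<le> dc m t y a"
      using pol m t y a by (intro stoch_policy_nonneg[of "Ob W m" "Ac W m" T "dc m"])
        (auto simp: comp_policy_iff)
    ultimately have between: "0 < dc m t y a" "dc m t y a < 1"
      using le1[OF m y a] by auto
    obtain ob where ob: "ob \<in> XO W" "ob m = y"
      using obtain_XO_coordinate[OF W m y] .
    obtain A where A: "A \<in> PiE {..<ncomp W} (Ac W)" "\<forall>i<ncomp W. 0 < dc i t (ob i) (A i)"
      using positive_joint_action[OF pol t ob(1)] .
    have A': "A(m := a) \<in> PiE {..<ncomp W} (Ac W)"
      using PiE_fun_upd[where T = "Ac W" and x = m, OF a A(1)] m by (simp add: insert_absorb)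
    have pos: "\<forall>i<ncomp W. 0 < dc i t (ob i) ((A(m := a)) i)"
      using A(2) between ob(2) by auto
    have "prod_policy W dc t ob (A(m := a)) \<notin> {0, 1}"
      unfolding prod_policy_def
    proof (rule prod_notin_01[where i = m])
      show "\<forall>j\<in>{..<ncomp W}. 0 < dc j t (ob j) ((A(m := a)) j) \<and> dc j t (ob j) ((A(m := a)) j) \<le> 1"
        using pos le1 XO_memD[OF ob(1)] PiE_mem[OF A'] by auto
    qed (use m between ob(2) in auto)
    moreover have "A(m := a) \<in> XA W"
      by (rule XA_if_prod_policy_pos[OF B t ob(1) A' pos])
    ultimately show False
      using det t ob(1) unfolding det_policy_def by blast
  qed
qed

lemma LB_feasible_canonical_tau:
  assumes W: "wc_valid W" and pol: "\<forall>m<ncomp W. comp_policy W T m (dc m)"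
    and B: "respects_budget W T dc"
    and det: "\<forall>m<ncomp W. deterministic (Ob W m) (Ac W m) T (dc m)"
  shows "LB_feasible W T (\<lambda>m. comp_canonical_tau W m (dc m)) dc"
  unfolding LB_feasible_def
proof (intro conjI allI impI ballI)
  show "comp_Qd W T m (comp_canonical_tau W m (dc m)) (dc m)" if m: "m < ncomp W" for m
    unfolding comp_Qd_def
    using pol det m by (intro pomdp.Qd_canonical_tau[OF pomdp_component[OF W m]])
      (auto simp: comp_policy_iff)
  fix ob t j assume ob: "ob \<in> XO W" and t: "t \<in> {1..T}"
  obtain A where A: "A \<in> PiE {..<ncomp W} (Ac W)" "\<forall>i<ncomp W. 0 < dc i t (ob i) (A i)"
    using positive_joint_action[OF pol t ob] .
  have "(\<Sum>m<ncomp W. \<Sum>a\<in>Ac W m. Dm W m a j * dc m t (ob m) a) = (\<Sum>m<ncomp W. Dm W m (A m) j)"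
  proof (intro sum.cong refl sum_mult_point_mass)
    fix m assume m: "m \<in> {..<ncomp W}"
    show "finite (Ac W m)" using finite_components[OF W m] by simp
    show "\<forall>a\<in>Ac W m. dc m t (ob m) a \<in> {0, 1}"
      using det m t XO_memD[OF ob] unfolding deterministic_def by auto
    show "sum (dc m t (ob m)) (Ac W m) = 1"
      using pol m t XO_memD[OF ob] by (intro stoch_policy_sum[of "Ob W m" "Ac W m" T "dc m"])
        (auto simp: comp_policy_iff)
    show "A m \<in> Ac W m" "dc m t (ob m) (A m) \<noteq> 0"
      using A m by (auto simp: PiE_mem less_imp_neq[symmetric])
  qed
  also have "\<dots> \<le> bvec W j"
    using XA_if_prod_policy_pos[OF B t ob A] by (simp add: XA_def)
  finally show "(\<Sum>m<ncomp W. \<Sum>a\<in>Ac W m. Dm W m a j * dc m t (ob m) a) \<le> bvec W j" .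
qed

lemma LB_feasible_of_det_decomposable:
  assumes W: "wc_valid W" and ml: "ml_policy W T \<delta>'" and det: "det_policy W T \<delta>'"
    and dec: "decomposable W T \<delta>'"
  obtains \<tau>' \<delta>'' where "LB_feasible W T \<tau>' \<delta>''" "pvalue W T \<delta>' = milp_obj W T \<tau>'"
proof -
  obtain dc where pol: "\<forall>m<ncomp W. comp_policy W T m (dc m)"
    and agree: "\<forall>t\<in>{1..T}. \<forall>ob\<in>XO W. \<forall>a\<in>XA W. \<delta>' t ob a = prod_policy W dc t ob a"
    using dec unfolding decomposable_def prod_policy_def by blast
  have B: "respects_budget W T dc"
    using ml ml_policy_cong[OF agree] ml_policy_prod_policy_iff[OF W pol] by blast
  have "det_policy W T (prod_policy W dc)"
    using det det_policy_cong[OF agree] by blast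
  then have LB: "LB_feasible W T (\<lambda>m. comp_canonical_tau W m (dc m)) dc"
    using decomposable_components_deterministic[OF W pol B]
    by (intro LB_feasible_canonical_tau[OF W pol B]) blast
  have "pvalue W T \<delta>' = pvalue W T (prod_policy W dc)"
    by (rule pvalue_cong[OF W agree])
  also have "\<dots> = milp_obj W T (\<lambda>m. comp_canonical_tau W m (dc m))"
    by (rule pvalue_LB[OF W LB])
  finally show ?thesis using that LB by blast
qed

lemma bdd_above_pvalue:
  assumes W: "wc_valid W"
  shows "bdd_above {pvalue W T \<delta> | \<delta>. ml_policy W T \<delta>}"
proof (rule bdd_aboveI)
  fix v assume "v \<in> {pvalue W T \<delta> | \<delta>. ml_policy W T \<delta>}"
  then obtain \<delta> where v: "v = pvalue W T \<delta>" and ml: "ml_policy W T \<delta>" by blast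
  show "v \<le> (\<Sum>t\<in>{1..T}. \<Sum>s\<in>XS W. \<Sum>a\<in>XA W. \<Sum>s'\<in>XS W. \<bar>RW W s a s'\<bar>)"
    unfolding v pvalue_eq_joint_stage_reward[OF W]
    using ml by (intro sum_mono pomdp.stage_reward_le[OF pomdp_joint[OF W]]) (auto simp: ml_policy_iff)
qed

lemma bdd_above_IP_objective:
  assumes W: "wc_valid W"
  shows "bdd_above {milp_obj W T \<tau> | \<tau> \<delta>. IP_feasible W T \<tau> \<delta>}"
proof (rule bdd_aboveI)
  fix v assume "v \<in> {milp_obj W T \<tau> | \<tau> \<delta>. IP_feasible W T \<tau> \<delta>}"
  then obtain \<tau> \<delta> where v: "v = milp_obj W T \<tau>" and Q: "\<forall>m<ncomp W. comp_Qd W T m (\<tau> m) (\<delta> m)"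
    unfolding IP_feasible_def by blast
  show "v \<le> (\<Sum>t\<in>{1..T}. \<Sum>m<ncomp W. \<Sum>s\<in>St W m. \<Sum>a\<in>Ac W m. \<Sum>s'\<in>St W m. \<bar>rew W m s a s'\<bar>)"
    unfolding v milp_obj_eq_sum_comp_stage_reward[OF W Q]
    using Q by (intro sum_mono pomdp.stage_reward_le[OF pomdp_component[OF W]]
        Qd_solution.policy_stochastic[OF Qd_solution_component[OF W]]) auto
qed

theorem mainTheorem5:
  fixes W :: "('s, 'o, 'a, 'q::finite) wcpomdp" and T :: nat
    and \<tau> :: "nat \<Rightarrow> ('s,'o,'a) tauvar" and \<delta> :: "nat \<Rightarrow> nat \<Rightarrow> 'o \<Rightarrow> 'a \<Rightarrow> real"
  assumes "wc_valid W"
    and "LB_optimal W T \<tau> \<delta>"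
  shows "ml_policy W T (prod_policy W \<delta>) \<and> det_policy W T (prod_policy W \<delta>) \<and>
         decomposable W T (prod_policy W \<delta>) \<and>
         (\<forall>\<delta>'. ml_policy W T \<delta>' \<and> det_policy W T \<delta>' \<and> decomposable W T \<delta>' \<longrightarrow>
                pvalue W T \<delta>' \<le> pvalue W T (prod_policy W \<delta>)) \<and>
         (\<forall>\<tau>' \<delta>'. LB_feasible W T \<tau>' \<delta>' \<longrightarrow> IP_feasible W T \<tau>' \<delta>') \<and>
         milp_obj W T \<tau> \<le> v_ml W T \<and>
         milp_obj W T \<tau> \<le> z_IP W T"
proof -
  note W = assms(1)
  have LB: "LB_feasible W T \<tau> \<delta>" using assms(2) unfolding LB_optimal_def by blast
  note induced_policy = LB_prod_policy[OF W LB]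
  have value_eq: "pvalue W T (prod_policy W \<delta>) = milp_obj W T \<tau>"
    by (rule pvalue_LB[OF W LB])
  have optimal: "pvalue W T \<delta>' \<le> pvalue W T (prod_policy W \<delta>)"
    if dd: "ml_policy W T \<delta>'" "det_policy W T \<delta>'" "decomposable W T \<delta>'" for \<delta>'
  proof -
    obtain \<tau>' \<delta>'' where "LB_feasible W T \<tau>' \<delta>''" "pvalue W T \<delta>' = milp_obj W T \<tau>'"
      using LB_feasible_of_det_decomposable[OF W dd] .
    then show ?thesis using assms(2) value_eq unfolding LB_optimal_def by auto
  qed
  have "milp_obj W T \<tau> \<le> v_ml W T"
    unfolding v_ml_def using value_eq induced_policy(1)
    by (intro cSup_upper[OF _ bdd_above_pvalue[OF W]]) force
  moreover have "milp_obj W T \<tau> \<le> z_IP W T"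
    unfolding z_IP_def using LB_IP_feasible[OF W LB]
    by (intro cSup_upper[OF _ bdd_above_IP_objective[OF W]]) blast
  ultimately show ?thesis
    using induced_policy optimal LB_IP_feasible[OF W] by blast
qed

end
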